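(* Let $\mathcal{M}=(N,\mathcal{I})$ be a matroid, $f:2^N\to\mathbb{R}$ a normalized submodular function, $\varepsilon\in(0,1)$, $\beta\ge0$. Let $I_1,\dots,I_k,S_1,\dots,S_k$ be random subsets of $N$; write $U_i=S_1\cup\dots\cup S_i$ and $V_i=I_1\cup\dots\cup I_i$ ($U_0=V_0=\emptyset$). Suppose: (a) for each $i$, almost surely $I_i\subseteq S_i\subseteq N\setminus\mathrm{span}(U_{i-1})$, $I_i$ is independent in $\mathcal{M}/U_{i-1}$, and, conditioned on $(I_j,S_j)_{j<i}$, $\mathbb{E}[f_{U_{i-1}}(I_i)]\ge(1-\varepsilon)\,\mathbb{E}[|S_i|]\cdot\max\{0,\max_{e\in N\setminus\mathrm{span}(U_{i-1})}f_{U_{i-1}}(e)\}$; (b) almost surely $f_{U_k}(T\setminus\mathrm{span}(U_k))\le\beta$ for all $T\in\mathcal{I}$. Then (i) $\mathbb{E}[f(V_k)]\ge(1-\varepsilon)\mathbb{E}[f(U_k)]$; and (ii) for every fixed $T\in\mathcal{I}$ there is a partition $T=T_1\cup\dots\cup T_{k+1}$, with each $T_i$ a deterministic function of $S_1,\dots,S_k$, such that $T_i\cap\mathrm{span}(U_{i-1})=\emptyset$ for each $i$, and $\mathbb{E}[f(V_k)]\ge(1-\varepsilon)\sum_{i=1}^{k+1}\mathbb{E}[f_{U_{i-1}}(T_i)]-(1-\varepsilon)\beta$.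
   Context: $f$ normalized: $f(\emptyset)=0$; submodular: $f(A)+f(B)\ge f(A\cup B)+f(A\cap B)$. $f_U(A)=f(U\cup A)-f(U)$. $\mathrm{span}(S)=\{e:\mathrm{rank}(S\cup\{e\})=\mathrm{rank}(S)\}$. The contraction $\mathcal{M}/U$ has ground set $N\setminus\mathrm{span}(U)$, and $A$ is independent in it iff $\mathrm{rank}(A\cup U)-\mathrm{rank}(U)=|A|$. *)

theory Defs
  imports "HOL-Probability.Probability_Mass_Function"
begin

definition matroid :: "'a set \<Rightarrow> 'a set set \<Rightarrow> bool" where
  "matroid N Ind \<longleftrightarrow> finite N \<and> Ind \<subseteq> Pow N \<and> {} \<in> Ind \<and>
     (\<forall>A B. A \<in> Ind \<and> B \<subseteq> A \<longrightarrow> B \<in> Ind) \<and>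
     (\<forall>A B. A \<in> Ind \<and> B \<in> Ind \<and> card A < card B \<longrightarrow> (\<exists>e\<in>B - A. insert e A \<in> Ind))"

definition mrank :: "'a set set \<Rightarrow> 'a set \<Rightarrow> nat" where
  "mrank Ind X = Max (card ` {A. A \<subseteq> X \<and> A \<in> Ind})"

definition mspan :: "'a set \<Rightarrow> 'a set set \<Rightarrow> 'a set \<Rightarrow> 'a set" where
  "mspan N Ind S = {e \<in> N. mrank Ind (S \<union> {e}) = mrank Ind S}"

text \<open>Independence in the contraction M/U (ground set N - span U).\<close>
definition contr_indep :: "'a set \<Rightarrow> 'a set set \<Rightarrow> 'a set \<Rightarrow> 'a set \<Rightarrow> bool" where
  "contr_indep N Ind U A \<longleftrightarrow> A \<subseteq> N - mspan N Ind U \<and>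
     mrank Ind (A \<union> U) = mrank Ind U + card A"

definition normalized :: "('a set \<Rightarrow> real) \<Rightarrow> bool" where
  "normalized f \<longleftrightarrow> f {} = 0"

definition submodular :: "'a set \<Rightarrow> ('a set \<Rightarrow> real) \<Rightarrow> bool" where
  "submodular N f \<longleftrightarrow> (\<forall>A B. A \<subseteq> N \<and> B \<subseteq> N \<longrightarrow> f A + f B \<ge> f (A \<union> B) + f (A \<inter> B))"

definition marg :: "('a set \<Rightarrow> real) \<Rightarrow> 'a set \<Rightarrow> 'a set \<Rightarrow> real" where
  "marg f U A = f (U \<union> A) - f U"

definition pref_union :: "(nat \<Rightarrow> 'b \<Rightarrow> 'a set) \<Rightarrow> nat \<Rightarrow> 'b \<Rightarrow> 'a set" where
  "pref_union X i \<omega> = (\<Union>j\<in>{1..i}. X j \<omega>)"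

definition hist_event :: "(nat \<Rightarrow> 'b \<Rightarrow> 'a set) \<Rightarrow> (nat \<Rightarrow> 'b \<Rightarrow> 'a set) \<Rightarrow> nat \<Rightarrow> 'b \<Rightarrow> 'b set" where
  "hist_event I S i \<omega>0 = {\<omega>. \<forall>j\<in>{1..<i}. I j \<omega> = I j \<omega>0 \<and> S j \<omega> = S j \<omega>0}"

definition best_marg :: "'a set \<Rightarrow> 'a set set \<Rightarrow> ('a set \<Rightarrow> real) \<Rightarrow> 'a set \<Rightarrow> real" where
  "best_marg N Ind f U = Max (insert 0 ((\<lambda>e. marg f U {e}) ` (N - mspan N Ind U)))"

end

theory Submission
  imports Defs
begin

text \<open>
  Telescoping over the rounds, f(V_k) is a sum of gains f_{V_{i-1}}(I_i), which by diminishing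
  returns dominate f_{U_{i-1}}(I_i); conditioning on the history, each of these is in expectation
  at least (1 - eps) |S_i| b_i, where b_i is the best single-element marginal after round i - 1.
  By subadditivity f(U_k) is at most the sum of the |S_i| b_i, which gives (i).
  For (ii), T_i consists of the elements of T entering span(U_i) but not span(U_{i-1}); the first
  i layers form an independent subset of span(U_i), so their sizes are dominated in every prefix by
  those of the S_j. As the b_i decrease, Abel summation bounds the sum of the f_{U_{i-1}}(T_i) by the
  sum of the |S_i| b_i, while the remainder T_{k+1} contributes at most beta by hypothesis (b).
\<close>

section \<open>Matroids\<close>

lemma subset_mspan: "X \<subseteq> N \<Longrightarrow> X \<subseteq> mspan N Ind X"
  unfolding mspan_def by (auto simp: insert_absorb)

context
  fixes N :: "'a set" and Ind :: "'a set set"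
  assumes M: "matroid N Ind"
begin

lemma finite_ground: "finite N"
  using M unfolding matroid_def by blast

lemma indep_subset_ground: "A \<in> Ind \<Longrightarrow> A \<subseteq> N"
  using M unfolding matroid_def by blast

lemma finite_indep: "A \<in> Ind \<Longrightarrow> finite A"
  using finite_subset[OF indep_subset_ground finite_ground] .

lemma indep_subset: "A \<in> Ind \<Longrightarrow> B \<subseteq> A \<Longrightarrow> B \<in> Ind"
  using M unfolding matroid_def by blast

lemma indep_augment: "A \<in> Ind \<Longrightarrow> B \<in> Ind \<Longrightarrow> card A < card B \<Longrightarrow> \<exists>e\<in>B - A. insert e A \<in> Ind"
  using M unfolding matroid_def by blast

lemma finite_indep_subsets: "finite {A. A \<subseteq> X \<and> A \<in> Ind}"
  by (rule finite_subset[of _ "Pow N"]) (use indep_subset_ground finite_ground in auto)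

lemma card_le_mrank: "A \<subseteq> X \<Longrightarrow> A \<in> Ind \<Longrightarrow> card A \<le> mrank Ind X"
  unfolding mrank_def by (rule Max_ge) (auto simp: finite_indep_subsets)

lemma obtain_basis:
  obtains B where "B \<subseteq> X" "B \<in> Ind" "card B = mrank Ind X"
proof -
  have "{} \<in> {A. A \<subseteq> X \<and> A \<in> Ind}" using M unfolding matroid_def by auto
  then have "mrank Ind X \<in> card ` {A. A \<subseteq> X \<and> A \<in> Ind}"
    unfolding mrank_def by (intro Max_in) (auto simp: finite_indep_subsets)
  then show ?thesis using that by auto
qed

lemma mrank_le_card: "finite X \<Longrightarrow> mrank Ind X \<le> card X"
  by (metis obtain_basis card_mono)

lemma card_maximal_indep:
  assumes "B \<in> Ind" "B \<subseteq> Y" and maximal: "\<And>x. x \<in> Y - B \<Longrightarrow> insert x B \<notin> Ind"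
  shows "card B = mrank Ind Y"
proof (rule antisym)
  show "card B \<le> mrank Ind Y" using card_le_mrank assms(1,2) by blast
  show "mrank Ind Y \<le> card B"
  proof (rule ccontr)
    obtain D where "D \<subseteq> Y" "D \<in> Ind" "card D = mrank Ind Y" by (rule obtain_basis)
    moreover assume "\<not> mrank Ind Y \<le> card B"
    ultimately show False using indep_augment[OF assms(1), of D] maximal by auto
  qed
qed

lemma indep_extend_maximal:
  assumes "A \<in> Ind" "A \<subseteq> Y"
  obtains B where "A \<subseteq> B" "B \<subseteq> Y" "B \<in> Ind" "\<And>x. x \<in> Y - B \<Longrightarrow> insert x B \<notin> Ind"
proof -
  define F where "F = {B. B \<in> Ind \<and> A \<subseteq> B \<and> B \<subseteq> Y}"
  have "finite F" unfolding F_def by (rule finite_subset[OF _ finite_indep_subsets[of Y]]) auto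
  moreover have "A \<in> F" unfolding F_def using assms by auto
  ultimately obtain B where B: "B \<in> F" "\<And>C. C \<in> F \<Longrightarrow> card C \<le> card B"
    using Max_in[of "card ` F"] Max_ge[of "card ` F"] by (metis empty_iff finite_imageI image_iff)
  have "insert x B \<notin> Ind" if "x \<in> Y - B" for x
  proof
    assume "insert x B \<in> Ind"
    then have "insert x B \<in> F" using B(1) that unfolding F_def by auto
    moreover have "card (insert x B) = Suc (card B)"
      using that B(1) finite_indep unfolding F_def by auto
    ultimately show False using B(2) by fastforce
  qed
  then show ?thesis using that B(1) unfolding F_def by auto
qed

lemma card_le_mrank_if_subset_mspan:
  assumes A: "A \<in> Ind" "A \<subseteq> mspan N Ind X"
  shows "card A \<le> mrank Ind X"
proof (rule ccontr)
  obtain B where B: "B \<subseteq> X" "B \<in> Ind" "card B = mrank Ind X" by (rule obtain_basis)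
  assume "\<not> card A \<le> mrank Ind X"
  then obtain e where e: "e \<in> A - B" "insert e B \<in> Ind"
    using indep_augment[OF B(2) A(1)] B(3) by auto
  have "card (insert e B) \<le> mrank Ind (X \<union> {e})"
    by (rule card_le_mrank[OF _ e(2)]) (use B in auto)
  moreover have "mrank Ind (X \<union> {e}) = mrank Ind X"
    using e A unfolding mspan_def by auto
  ultimately show False using e B finite_indep by simp
qed

lemma indep_disjoint_mspan_empty: "T \<in> Ind \<Longrightarrow> T \<inter> mspan N Ind {} = {}"
proof (rule ccontr)
  assume "T \<in> Ind" "T \<inter> mspan N Ind {} \<noteq> {}"
  then obtain x where "{x} \<in> Ind" "{x} \<subseteq> mspan N Ind {}" using indep_subset by blast
  then have "card {x} \<le> mrank Ind {}" by (rule card_le_mrank_if_subset_mspan)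
  moreover have "mrank Ind {} = 0" using mrank_le_card[of "{}"] by simp
  ultimately show False by simp
qed

lemma mspan_mono:
  assumes XY: "X \<subseteq> Y"
  shows "mspan N Ind X \<subseteq> mspan N Ind Y"
proof
  fix e assume "e \<in> mspan N Ind X"
  then have e: "e \<in> N" "mrank Ind (X \<union> {e}) = mrank Ind X" unfolding mspan_def by auto
  show "e \<in> mspan N Ind Y"
  proof (rule ccontr)
    assume e_notin: "e \<notin> mspan N Ind Y"
    then have "e \<notin> Y" using e(1) unfolding mspan_def by (auto simp: insert_absorb)
    obtain BX where BX: "BX \<subseteq> X" "BX \<in> Ind" "card BX = mrank Ind X" by (rule obtain_basis)
    then obtain B where B: "BX \<subseteq> B" "B \<subseteq> Y" "B \<in> Ind" "\<And>x. x \<in> Y - B \<Longrightarrow> insert x B \<notin> Ind"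
      using XY indep_extend_maximal by (metis subset_trans)
    \<comment> \<open>Otherwise B would be a basis of both Y and Y + e, so e would lie in the span of Y.\<close>
    have "insert e B \<in> Ind"
    proof (rule ccontr)
      assume "insert e B \<notin> Ind"
      then have "card B = mrank Ind (Y \<union> {e})" using B by (intro card_maximal_indep) auto
      moreover have "card B = mrank Ind Y" using B by (intro card_maximal_indep) auto
      ultimately show False using e_notin e(1) unfolding mspan_def by simp
    qed
    then have "insert e BX \<in> Ind" using B(1) indep_subset by blast
    then have "card (insert e BX) \<le> mrank Ind (X \<union> {e})"
      by (rule card_le_mrank[rotated]) (use BX in auto)
    moreover have "e \<notin> BX" using \<open>e \<notin> Y\<close> BX XY by auto
    ultimately show False using e BX finite_indep by simp
  qed
qed

end

section \<open>Submodular functions\<close>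

context
  fixes N :: "'a set" and f :: "'a set \<Rightarrow> real"
  assumes sub: "submodular N f"
begin

lemma marg_antimono:
  assumes "X \<subseteq> Y" "Y \<subseteq> N" "A \<subseteq> N" "A \<inter> Y = {}"
  shows "marg f Y A \<le> marg f X A"
proof -
  have "f ((X \<union> A) \<union> Y) + f ((X \<union> A) \<inter> Y) \<le> f (X \<union> A) + f Y"
    using sub assms unfolding submodular_def by (meson Un_subset_iff subset_trans)
  moreover have "(X \<union> A) \<union> Y = Y \<union> A" "(X \<union> A) \<inter> Y = X" using assms by auto
  ultimately show ?thesis unfolding marg_def by simp
qed

lemma marg_le_sum_singletons:
  assumes "U \<subseteq> N" "finite A" "A \<subseteq> N"
  shows "marg f U A \<le> (\<Sum>e\<in>A. marg f U {e})"
  using assms(2,3)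
proof (induction A rule: finite_induct)
  case empty
  then show ?case by (simp add: marg_def)
next
  case (insert e A)
  have "U \<union> A \<subseteq> N" "U \<union> {e} \<subseteq> N" using assms(1) insert.prems by auto
  then have "f ((U \<union> A) \<union> (U \<union> {e})) + f ((U \<union> A) \<inter> (U \<union> {e})) \<le> f (U \<union> A) + f (U \<union> {e})"
    using sub unfolding submodular_def by blast
  moreover have "(U \<union> A) \<union> (U \<union> {e}) = U \<union> insert e A" "(U \<union> A) \<inter> (U \<union> {e}) = U"
    using insert.hyps by auto
  ultimately have "marg f U (insert e A) \<le> marg f U A + marg f U {e}"
    unfolding marg_def by simp
  then show ?case using insert by simp
qed

end

context
  fixes N :: "'a set" and Ind :: "'a set set" and f :: "'a set \<Rightarrow> real"
  assumes M: "matroid N Ind"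
begin

lemma best_marg_nonneg: "0 \<le> best_marg N Ind f U"
  unfolding best_marg_def using finite_ground[OF M] by (auto intro: Max_ge)

lemma marg_singleton_le_best_marg: "e \<in> N - mspan N Ind U \<Longrightarrow> marg f U {e} \<le> best_marg N Ind f U"
  unfolding best_marg_def using finite_ground[OF M] by (auto intro: Max_ge)

lemma best_marg_cases:
  "best_marg N Ind f U = 0 \<or> (\<exists>e\<in>N - mspan N Ind U. best_marg N Ind f U = marg f U {e})"
proof -
  have "best_marg N Ind f U \<in> insert 0 ((\<lambda>e. marg f U {e}) ` (N - mspan N Ind U))"
    unfolding best_marg_def using finite_ground[OF M] by (intro Max_in) auto
  then show ?thesis by auto
qed

lemma marg_le_card_mult_best_marg:
  assumes "submodular N f" "U \<subseteq> N" "A \<subseteq> N - mspan N Ind U"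
  shows "marg f U A \<le> real (card A) * best_marg N Ind f U"
proof -
  have "finite A" using assms(3) finite_subset finite_ground[OF M] by blast
  then have "marg f U A \<le> (\<Sum>e\<in>A. marg f U {e})"
    using marg_le_sum_singletons assms by blast
  also have "\<dots> \<le> (\<Sum>e\<in>A. best_marg N Ind f U)"
    by (rule sum_mono) (use assms(3) marg_singleton_le_best_marg in auto)
  finally show ?thesis by simp
qed

lemma best_marg_antimono:
  assumes "submodular N f" "X \<subseteq> Y" "Y \<subseteq> N"
  shows "best_marg N Ind f Y \<le> best_marg N Ind f X"
  using best_marg_cases[of Y]
proof
  assume "\<exists>e\<in>N - mspan N Ind Y. best_marg N Ind f Y = marg f Y {e}"
  then obtain e where e: "e \<in> N - mspan N Ind Y" "best_marg N Ind f Y = marg f Y {e}" ..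
  have "marg f Y {e} \<le> marg f X {e}"
    using e(1) subset_mspan[OF assms(3), of Ind] by (intro marg_antimono[OF assms(1)] assms(2,3)) auto
  also have "\<dots> \<le> best_marg N Ind f X"
    using e(1) mspan_mono[OF M assms(2)] by (intro marg_singleton_le_best_marg) auto
  finally show ?thesis using e(2) by simp
qed (simp add: best_marg_nonneg)

end

section \<open>Prefix unions, Abel summation and layers of a chain\<close>

lemma pref_union_0 [simp]: "pref_union X 0 \<omega> = {}"
  unfolding pref_union_def by simp

lemma pref_union_Suc: "pref_union X (Suc n) \<omega> = pref_union X n \<omega> \<union> X (Suc n) \<omega>"
  unfolding pref_union_def by (auto simp: atLeastAtMostSuc_conv)

lemma pref_union_mono: "i \<le> j \<Longrightarrow> pref_union X i \<omega> \<subseteq> pref_union X j \<omega>"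
  unfolding pref_union_def by (rule UN_mono) auto

lemma pref_union_telescope:
  "f {} = 0 \<Longrightarrow> f (pref_union X n \<omega>) = (\<Sum>i=1..n. marg f (pref_union X (i - 1) \<omega>) (X i \<omega>))"
  by (induction n) (simp_all add: pref_union_Suc marg_def)

lemma Union_take_eq_pref_union:
  assumes "j \<le> k"
  shows "\<Union> (set (take j (map (\<lambda>i. X i \<omega>) [1..<k+1]))) = pref_union X j \<omega>"
proof -
  have "take j [1..<k+1] = [1..<1+j]" by (rule take_upt) (use assms in linarith)
  moreover have "{1..<1+j} = {1..j}" by auto
  ultimately show ?thesis unfolding take_map set_map pref_union_def by (simp only: set_upt)
qed

lemma sum_mult_le_of_partial_sums_le:
  fixes t s b :: "nat \<Rightarrow> real"
  assumes partial: "\<And>m. m \<le> k \<Longrightarrow> (\<Sum>i=1..m. t i) \<le> (\<Sum>i=1..m. s i)"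
    and antimono: "\<And>i. 1 \<le> i \<Longrightarrow> i < k \<Longrightarrow> b (Suc i) \<le> b i"
    and nonneg: "0 \<le> b k"
  shows "(\<Sum>i=1..k. t i * b i) \<le> (\<Sum>i=1..k. s i * b i)"
proof -
  let ?d = "\<lambda>m. \<Sum>i=1..m. s i - t i"
  \<comment> \<open>Abel summation: the weights only decrease, and the partial sums of s - t are nonnegative.\<close>
  have abel: "?d m * b m \<le> (\<Sum>i=1..m. (s i - t i) * b i)" if "m \<le> k" for m
    using that
  proof (induction m)
    case (Suc m)
    have "0 \<le> ?d m" using partial[of m] Suc.prems by (simp add: sum_subtractf)
    then have "?d m * b (Suc m) \<le> ?d m * b m"
      using antimono[of m] Suc.prems by (cases "m = 0") (auto intro: mult_left_mono)
    then show ?case using Suc by (simp add: algebra_simps)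
  qed simp
  have "0 \<le> ?d k * b k" using partial[of k] nonneg by (simp add: sum_subtractf)
  with abel[of k] show ?thesis by (simp add: algebra_simps sum_subtractf)
qed

definition chain_layer :: "(nat \<Rightarrow> 'a set) \<Rightarrow> nat \<Rightarrow> 'a set \<Rightarrow> nat \<Rightarrow> 'a set" where
  "chain_layer W k T i = (if i = k + 1 then T else T \<inter> W i) - (\<Union>j<i. W j)"

lemma chain_layer_subset: "chain_layer W k T i \<subseteq> T"
  unfolding chain_layer_def by auto

lemma chain_layer_subset_chain: "i \<le> k \<Longrightarrow> chain_layer W k T i \<subseteq> W i"
  unfolding chain_layer_def by auto

lemma chain_layer_disjoint_chain: "j < i \<Longrightarrow> chain_layer W k T i \<inter> W j = {}"
  unfolding chain_layer_def by auto

lemma disjoint_family_on_chain_layer: "disjoint_family_on (chain_layer W k T) {1..k+1}"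
proof -
  have "chain_layer W k T i \<inter> chain_layer W k T j = {}" if "i < j" "j \<le> k + 1" for i j
    using chain_layer_subset_chain[of i k W T] chain_layer_disjoint_chain[OF that(1), of W k T] that
    by auto
  then show ?thesis
    unfolding disjoint_family_on_def by (metis Int_commute atLeastAtMost_iff linorder_neqE_nat)
qed

lemma Union_chain_layer:
  assumes "T \<inter> W 0 = {}"
  shows "(\<Union>i\<in>{1..k+1}. chain_layer W k T i) = T"
proof
  show "T \<subseteq> (\<Union>i\<in>{1..k+1}. chain_layer W k T i)"
  proof
    fix x assume x: "x \<in> T"
    show "x \<in> (\<Union>i\<in>{1..k+1}. chain_layer W k T i)"
    proof (cases "\<exists>j\<le>k. x \<in> W j")
      case True
      define i where "i = (LEAST j. j \<le> k \<and> x \<in> W j)"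
      have i: "i \<le> k \<and> x \<in> W i"
        unfolding i_def by (rule LeastI_ex) (use True in blast)
      have before: "x \<notin> W j" if "j < i" for j
      proof -
        have "\<not> (j \<le> k \<and> x \<in> W j)" using that unfolding i_def by (rule not_less_Least)
        then show ?thesis using that i by simp
      qed
      have "x \<in> chain_layer W k T i" using i x before unfolding chain_layer_def by simp
      moreover have "i \<noteq> 0" using i x assms by auto
      ultimately show ?thesis using i by (intro UN_I[of i]) auto
    next
      case False
      then have "x \<in> chain_layer W k T (k + 1)" using x unfolding chain_layer_def by auto
      then show ?thesis by auto
    qed
  qed
qed (intro UN_least chain_layer_subset)

lemma Union_chain_layer_subset_chain:
  assumes "mono W" "m \<le> k"
  shows "(\<Union>i\<in>{1..m}. chain_layer W k T i) \<subseteq> W m"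
proof (rule UN_least)
  fix i assume i: "i \<in> {1..m}"
  then have "chain_layer W k T i \<subseteq> W i" using assms(2) by (intro chain_layer_subset_chain) simp
  also have "W i \<subseteq> W m" using i by (intro monoD[OF assms(1)]) simp
  finally show "chain_layer W k T i \<subseteq> W m" .
qed

lemma chain_layer_cong:
  "(\<And>j. j \<le> k \<Longrightarrow> W j = W' j) \<Longrightarrow> i \<le> k + 1 \<Longrightarrow> chain_layer W k T i = chain_layer W' k T i"
  unfolding chain_layer_def by (cases "i = k + 1") auto

section \<open>Expectations over a probability mass function\<close>

lemma integrable_measure_pmf_bounded:
  fixes g :: "'b \<Rightarrow> real"
  assumes "\<And>\<omega>. \<omega> \<in> set_pmf p \<Longrightarrow> \<bar>g \<omega>\<bar> \<le> B"
  shows "integrable (measure_pmf p) g"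
  by (rule measure_pmf.integrable_const_bound[where B = B]) (auto simp: AE_measure_pmf_iff assms)

lemma abs_expectation_le_bound:
  fixes g :: "'b \<Rightarrow> real"
  assumes "\<And>\<omega>. \<omega> \<in> set_pmf p \<Longrightarrow> \<bar>g \<omega>\<bar> \<le> B"
  shows "\<bar>measure_pmf.expectation p g\<bar> \<le> B"
proof -
  have "\<bar>measure_pmf.expectation p g\<bar> \<le> measure_pmf.expectation p (\<lambda>\<omega>. \<bar>g \<omega>\<bar>)"
    by (rule integral_abs_bound)
  also have "\<dots> \<le> measure_pmf.expectation p (\<lambda>_. B)"
    by (rule integral_mono_AE)
       (auto intro!: integrable_measure_pmf_bounded[where B = B] simp: AE_measure_pmf_iff assms)
  finally show ?thesis by simp
qed

lemma expectation_cond_pmf_fibres: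
  fixes g :: "'b \<Rightarrow> real" and H :: "'b \<Rightarrow> 'c"
  assumes bounded: "\<And>\<omega>. \<omega> \<in> set_pmf p \<Longrightarrow> \<bar>g \<omega>\<bar> \<le> B"
  shows "measure_pmf.expectation p g =
    measure_pmf.expectation p (\<lambda>x. measure_pmf.expectation (cond_pmf p {y. H y = H x}) g)"
proof -
  let ?c = "\<lambda>x. cond_pmf p {y. H y = H x}"
  \<comment> \<open>Cut g off outside the support, so that it is bounded everywhere as integral_bind requires.\<close>
  define g' where "g' = (\<lambda>\<omega>. if \<omega> \<in> set_pmf p then g \<omega> else 0)"
  have B: "0 \<le> B" using bounded set_pmf_not_empty[of p] by fastforce
  have cancel: "bind_pmf p ?c = p"
    by (rule bind_cond_pmf_cancel) (auto intro: arg_cong[where f = "measure_pmf.prob p"])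
  have "measure_pmf.expectation p g = measure_pmf.expectation p g'"
    by (rule integral_cong_AE) (auto simp: AE_measure_pmf_iff g'_def)
  also have "\<dots> = measure_pmf.expectation (bind_pmf p ?c) g'"
    by (simp add: cancel)
  also have "\<dots> = measure_pmf.expectation p (\<lambda>x. measure_pmf.expectation (?c x) g')"
    unfolding measure_pmf_bind
    by (rule integral_bind[where K = "count_space UNIV" and B = B and B' = 1])
       (auto simp: g'_def bounded B measure_pmf.prob_space_axioms prob_space.finite_measure
          measure_pmf.emeasure_space_1 measure_pmf_in_subprob_space)
  also have "\<dots> = measure_pmf.expectation p (\<lambda>x. measure_pmf.expectation (?c x) g)"
  proof (rule integral_cong_AE)
    show "AE x in measure_pmf p. measure_pmf.expectation (?c x) g' = measure_pmf.expectation (?c x) g"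
    proof (unfold AE_measure_pmf_iff, intro ballI)
      fix x assume "x \<in> set_pmf p"
      then have "set_pmf p \<inter> {y. H y = H x} \<noteq> {}" by auto
      then show "measure_pmf.expectation (?c x) g' = measure_pmf.expectation (?c x) g"
        by (intro integral_cong_AE) (auto simp: AE_measure_pmf_iff g'_def)
    qed
  qed auto
  finally show ?thesis .
qed

lemma expectation_le_of_cond_expectation_le:
  fixes g h :: "'b \<Rightarrow> real" and H :: "'b \<Rightarrow> 'c"
  assumes bounded: "\<And>\<omega>. \<omega> \<in> set_pmf p \<Longrightarrow> \<bar>g \<omega>\<bar> \<le> B" "\<And>\<omega>. \<omega> \<in> set_pmf p \<Longrightarrow> \<bar>h \<omega>\<bar> \<le> B'"
    and le: "\<And>x. x \<in> set_pmf p \<Longrightarrow>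
      measure_pmf.expectation (cond_pmf p {y. H y = H x}) g
        \<le> measure_pmf.expectation (cond_pmf p {y. H y = H x}) h"
  shows "measure_pmf.expectation p g \<le> measure_pmf.expectation p h"
proof -
  let ?E = "\<lambda>g x. measure_pmf.expectation (cond_pmf p {y. H y = H x}) g"
  have cond_bounded: "\<bar>?E g' x\<bar> \<le> C"
    if "x \<in> set_pmf p" and "\<And>\<omega>. \<omega> \<in> set_pmf p \<Longrightarrow> \<bar>g' \<omega>\<bar> \<le> C" for g' :: "'b \<Rightarrow> real" and x C
  proof -
    have "set_pmf p \<inter> {y. H y = H x} \<noteq> {}" using that(1) by auto
    then show ?thesis by (intro abs_expectation_le_bound) (auto simp: that(2))
  qed
  have "measure_pmf.expectation p g = measure_pmf.expectation p (?E g)"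
    by (rule expectation_cond_pmf_fibres[OF bounded(1)])
  also have "\<dots> \<le> measure_pmf.expectation p (?E h)"
    by (intro integral_mono_AE integrable_measure_pmf_bounded[where B = B]
          integrable_measure_pmf_bounded[where B = B'])
       (auto simp: AE_measure_pmf_iff le intro: cond_bounded bounded)
  also have "\<dots> = measure_pmf.expectation p h"
    by (rule expectation_cond_pmf_fibres[OF bounded(2), symmetric])
  finally show ?thesis .
qed

section \<open>The greedy rounds\<close>

locale matroid_greedy_rounds =
  fixes N :: "'a set" and Ind :: "'a set set" and f :: "'a set \<Rightarrow> real"
    and \<epsilon> :: real and k :: nat and p :: "'b pmf" and I S :: "nat \<Rightarrow> 'b \<Rightarrow> 'a set"
  assumes M: "matroid N Ind"
    and f_norm: "normalized f" and f_sub: "submodular N f"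
    and eps: "0 \<le> \<epsilon>" "\<epsilon> \<le> 1"
    and I_subset_S: "\<And>i \<omega>. i \<in> {1..k} \<Longrightarrow> \<omega> \<in> set_pmf p \<Longrightarrow> I i \<omega> \<subseteq> S i \<omega>"
    and S_subset: "\<And>i \<omega>. i \<in> {1..k} \<Longrightarrow> \<omega> \<in> set_pmf p \<Longrightarrow>
        S i \<omega> \<subseteq> N - mspan N Ind (pref_union S (i - 1) \<omega>)"
    and expected_gain: "\<And>i \<omega>0. i \<in> {1..k} \<Longrightarrow> \<omega>0 \<in> set_pmf p \<Longrightarrow>
        measure_pmf.expectation (cond_pmf p (hist_event I S i \<omega>0))
          (\<lambda>\<omega>. marg f (pref_union S (i - 1) \<omega>) (I i \<omega>))
        \<ge> (1 - \<epsilon>) * measure_pmf.expectation (cond_pmf p (hist_event I S i \<omega>0))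
              (\<lambda>\<omega>. real (card (S i \<omega>)))
            * best_marg N Ind f (pref_union S (i - 1) \<omega>0)"
begin

abbreviation U :: "nat \<Rightarrow> 'b \<Rightarrow> 'a set" where "U \<equiv> pref_union S"
abbreviation V :: "nat \<Rightarrow> 'b \<Rightarrow> 'a set" where "V \<equiv> pref_union I"

text \<open>A crude bound on f over the subsets of N; it only serves to make every random quantity
  below integrable.\<close>

definition fbound :: real where "fbound = (\<Sum>X\<in>Pow N. \<bar>f X\<bar>)"

lemma abs_f_le_fbound: "X \<subseteq> N \<Longrightarrow> \<bar>f X\<bar> \<le> fbound"
  unfolding fbound_def by (rule member_le_sum) (simp_all add: finite_ground[OF M])

lemma abs_marg_le_fbound:
  assumes "X \<subseteq> N" "A \<subseteq> N"
  shows "\<bar>marg f X A\<bar> \<le> 2 * fbound"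
proof -
  have "\<bar>f (X \<union> A)\<bar> \<le> fbound" "\<bar>f X\<bar> \<le> fbound" using assms by (simp_all add: abs_f_le_fbound)
  then show ?thesis unfolding marg_def using abs_triangle_ineq4[of "f (X \<union> A)" "f X"] by linarith
qed

lemma best_marg_le_fbound:
  assumes "X \<subseteq> N"
  shows "best_marg N Ind f X \<le> 2 * fbound"
  using best_marg_cases[OF M, of f X]
proof
  assume "best_marg N Ind f X = 0"
  moreover have "\<bar>f {}\<bar> \<le> fbound" by (rule abs_f_le_fbound) simp
  ultimately show ?thesis by linarith
next
  assume "\<exists>e\<in>N - mspan N Ind X. best_marg N Ind f X = marg f X {e}"
  then obtain e where e: "e \<in> N" "best_marg N Ind f X = marg f X {e}" by blast
  have "\<bar>marg f X {e}\<bar> \<le> 2 * fbound" using e(1) assms by (intro abs_marg_le_fbound) auto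
  then show ?thesis using e(2) by linarith
qed

lemma U_subset_ground: "j \<le> k \<Longrightarrow> \<omega> \<in> set_pmf p \<Longrightarrow> U j \<omega> \<subseteq> N"
  unfolding pref_union_def using S_subset by fastforce

lemma V_subset_U: "j \<le> k \<Longrightarrow> \<omega> \<in> set_pmf p \<Longrightarrow> V j \<omega> \<subseteq> U j \<omega>"
  unfolding pref_union_def using I_subset_S by fastforce

lemma V_subset_ground: "j \<le> k \<Longrightarrow> \<omega> \<in> set_pmf p \<Longrightarrow> V j \<omega> \<subseteq> N"
  using V_subset_U U_subset_ground by blast

definition gain :: "nat \<Rightarrow> 'b \<Rightarrow> real" where
  "gain i \<omega> = marg f (U (i - 1) \<omega>) (I i \<omega>)"

definition budget :: "nat \<Rightarrow> 'b \<Rightarrow> real" where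
  "budget i \<omega> = real (card (S i \<omega>)) * best_marg N Ind f (U (i - 1) \<omega>)"

lemma abs_gain_le:
  assumes "i \<in> {1..k}" "\<omega> \<in> set_pmf p"
  shows "\<bar>gain i \<omega>\<bar> \<le> 2 * fbound"
proof -
  have "I i \<omega> \<subseteq> N" using I_subset_S[OF assms] S_subset[OF assms] by blast
  moreover have "U (i - 1) \<omega> \<subseteq> N" by (rule U_subset_ground) (use assms in auto)
  ultimately show ?thesis unfolding gain_def by (intro abs_marg_le_fbound)
qed

lemma abs_budget_le:
  assumes "i \<in> {1..k}" "\<omega> \<in> set_pmf p"
  shows "\<bar>budget i \<omega>\<bar> \<le> real (card N) * (2 * fbound)"
proof -
  have "card (S i \<omega>) \<le> card N"
    using S_subset[OF assms] finite_ground[OF M] by (meson Diff_subset card_mono subset_trans)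
  moreover have "U (i - 1) \<omega> \<subseteq> N" by (rule U_subset_ground) (use assms in auto)
  then have "best_marg N Ind f (U (i - 1) \<omega>) \<le> 2 * fbound" by (rule best_marg_le_fbound)
  ultimately show ?thesis
    unfolding budget_def using best_marg_nonneg[OF M] by (simp add: abs_mult mult_mono)
qed

lemma expectation_budget_le_gain:
  assumes i: "i \<in> {1..k}"
  shows "(1 - \<epsilon>) * measure_pmf.expectation p (budget i) \<le> measure_pmf.expectation p (gain i)"
proof -
  define H where "H \<omega> = map (\<lambda>j. (I j \<omega>, S j \<omega>)) [1..<i]" for \<omega>
  have hist: "hist_event I S i x = {y. H y = H x}" for x
    unfolding hist_event_def H_def by auto
  have U_eq: "U (i - 1) y = U (i - 1) x" if "H y = H x" for x y
  proof -
    have "S j y = S j x" if "j \<in> {1..i - 1}" for j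
      using \<open>H y = H x\<close> that i unfolding H_def by auto
    then show ?thesis unfolding pref_union_def by (rule SUP_cong[OF refl])
  qed
  have "measure_pmf.expectation p (\<lambda>\<omega>. (1 - \<epsilon>) * budget i \<omega>) \<le> measure_pmf.expectation p (gain i)"
  proof (rule expectation_le_of_cond_expectation_le[where H = H])
    fix \<omega> assume \<omega>: "\<omega> \<in> set_pmf p"
    have "\<bar>(1 - \<epsilon>) * budget i \<omega>\<bar> \<le> 1 * (real (card N) * (2 * fbound))"
      unfolding abs_mult using eps abs_budget_le[OF i \<omega>] by (intro mult_mono) auto
    then show "\<bar>(1 - \<epsilon>) * budget i \<omega>\<bar> \<le> real (card N) * (2 * fbound)" by simp
    show "\<bar>gain i \<omega>\<bar> \<le> 2 * fbound" by (rule abs_gain_le[OF i \<omega>])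
  next
    fix x assume x: "x \<in> set_pmf p"
    let ?c = "cond_pmf p {y. H y = H x}"
    have "set_pmf p \<inter> {y. H y = H x} \<noteq> {}" using x by auto
    then have fibre: "H y = H x" if "y \<in> set_pmf ?c" for y
      using that by simp
    have U_fibre: "U (i - 1) y = U (i - 1) x" if "y \<in> set_pmf ?c" for y
      using fibre[OF that] by (rule U_eq)
    have "measure_pmf.expectation ?c (\<lambda>\<omega>. (1 - \<epsilon>) * budget i \<omega>)
        = measure_pmf.expectation ?c
            (\<lambda>\<omega>. (1 - \<epsilon>) * real (card (S i \<omega>)) * best_marg N Ind f (U (i - 1) x))"
      by (intro integral_cong_AE) (auto simp: AE_measure_pmf_iff budget_def dest: U_fibre)
    also have "\<dots> = (1 - \<epsilon>) * measure_pmf.expectation ?c (\<lambda>\<omega>. real (card (S i \<omega>)))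
        * best_marg N Ind f (U (i - 1) x)"
      by simp
    also have "\<dots> \<le> measure_pmf.expectation ?c (gain i)"
      using expected_gain[OF i x] unfolding hist gain_def by simp
    finally show "measure_pmf.expectation ?c (\<lambda>\<omega>. (1 - \<epsilon>) * budget i \<omega>)
        \<le> measure_pmf.expectation ?c (gain i)" .
  qed
  then show ?thesis by simp
qed

lemma sum_gain_le_f_V:
  assumes \<omega>: "\<omega> \<in> set_pmf p"
  shows "(\<Sum>i=1..k. gain i \<omega>) \<le> f (V k \<omega>)"
proof -
  have "(\<Sum>i=1..k. gain i \<omega>) \<le> (\<Sum>i=1..k. marg f (V (i - 1) \<omega>) (I i \<omega>))"
  proof (rule sum_mono)
    fix i assume i: "i \<in> {1..k}"
    have U: "U (i - 1) \<omega> \<subseteq> N" by (rule U_subset_ground) (use i \<omega> in auto)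
    have "I i \<omega> \<subseteq> N - mspan N Ind (U (i - 1) \<omega>)" using I_subset_S[OF i \<omega>] S_subset[OF i \<omega>] by blast
    then have "I i \<omega> \<subseteq> N" "I i \<omega> \<inter> U (i - 1) \<omega> = {}" using subset_mspan[OF U, of Ind] by auto
    moreover have "V (i - 1) \<omega> \<subseteq> U (i - 1) \<omega>" by (rule V_subset_U) (use i \<omega> in auto)
    ultimately show "gain i \<omega> \<le> marg f (V (i - 1) \<omega>) (I i \<omega>)"
      unfolding gain_def using U by (intro marg_antimono[OF f_sub])
  qed
  also have "\<dots> = f (V k \<omega>)"
    using f_norm by (intro pref_union_telescope[symmetric]) (simp add: normalized_def)
  finally show ?thesis .
qed

lemma f_U_le_sum_budget:
  assumes \<omega>: "\<omega> \<in> set_pmf p"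
  shows "f (U k \<omega>) \<le> (\<Sum>i=1..k. budget i \<omega>)"
proof -
  have "f (U k \<omega>) = (\<Sum>i=1..k. marg f (U (i - 1) \<omega>) (S i \<omega>))"
    using f_norm by (intro pref_union_telescope) (simp add: normalized_def)
  also have "\<dots> \<le> (\<Sum>i=1..k. budget i \<omega>)"
  proof (rule sum_mono)
    fix i assume i: "i \<in> {1..k}"
    have "U (i - 1) \<omega> \<subseteq> N" by (rule U_subset_ground) (use i \<omega> in auto)
    then show "marg f (U (i - 1) \<omega>) (S i \<omega>) \<le> budget i \<omega>"
      unfolding budget_def by (rule marg_le_card_mult_best_marg[OF M f_sub _ S_subset[OF i \<omega>]])
  qed
  finally show ?thesis .
qed

lemma integrable_f_pref_union:
  assumes "\<And>\<omega>. \<omega> \<in> set_pmf p \<Longrightarrow> X \<omega> \<subseteq> N"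
  shows "integrable (measure_pmf p) (\<lambda>\<omega>. f (X \<omega>))"
  by (rule integrable_measure_pmf_bounded[where B = fbound]) (rule abs_f_le_fbound[OF assms])

lemma integrable_budget: "i \<in> {1..k} \<Longrightarrow> integrable (measure_pmf p) (budget i)"
  using abs_budget_le by (rule integrable_measure_pmf_bounded)

lemma expectation_sum_budget_le_f_V:
  "(1 - \<epsilon>) * measure_pmf.expectation p (\<lambda>\<omega>. \<Sum>i=1..k. budget i \<omega>)
     \<le> measure_pmf.expectation p (\<lambda>\<omega>. f (V k \<omega>))"
proof -
  have int_gain: "integrable (measure_pmf p) (gain i)" if "i \<in> {1..k}" for i
    using abs_gain_le[OF that] by (rule integrable_measure_pmf_bounded)
  have "(1 - \<epsilon>) * measure_pmf.expectation p (\<lambda>\<omega>. \<Sum>i=1..k. budget i \<omega>)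
      = (\<Sum>i=1..k. (1 - \<epsilon>) * measure_pmf.expectation p (budget i))"
    using integrable_budget by (simp add: Bochner_Integration.integral_sum sum_distrib_left)
  also have "\<dots> \<le> (\<Sum>i=1..k. measure_pmf.expectation p (gain i))"
    by (rule sum_mono) (rule expectation_budget_le_gain)
  also have "\<dots> = measure_pmf.expectation p (\<lambda>\<omega>. \<Sum>i=1..k. gain i \<omega>)"
    using int_gain by (simp add: Bochner_Integration.integral_sum)
  also have "\<dots> \<le> measure_pmf.expectation p (\<lambda>\<omega>. f (V k \<omega>))"
    using sum_gain_le_f_V V_subset_ground
    by (intro integral_mono_AE Bochner_Integration.integrable_sum int_gain integrable_f_pref_union)
       (auto simp: AE_measure_pmf_iff)
  finally show ?thesis .
qed

lemma expectation_f_U_le_f_V: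
  "(1 - \<epsilon>) * measure_pmf.expectation p (\<lambda>\<omega>. f (U k \<omega>))
     \<le> measure_pmf.expectation p (\<lambda>\<omega>. f (V k \<omega>))"
proof -
  have "measure_pmf.expectation p (\<lambda>\<omega>. f (U k \<omega>))
      \<le> measure_pmf.expectation p (\<lambda>\<omega>. \<Sum>i=1..k. budget i \<omega>)"
    using f_U_le_sum_budget U_subset_ground
    by (intro integral_mono_AE Bochner_Integration.integrable_sum integrable_budget integrable_f_pref_union)
       (auto simp: AE_measure_pmf_iff)
  then have "(1 - \<epsilon>) * measure_pmf.expectation p (\<lambda>\<omega>. f (U k \<omega>))
      \<le> (1 - \<epsilon>) * measure_pmf.expectation p (\<lambda>\<omega>. \<Sum>i=1..k. budget i \<omega>)"
    using eps(2) by (intro mult_left_mono) auto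
  then show ?thesis using expectation_sum_budget_le_f_V by linarith
qed

abbreviation span_chain :: "'b \<Rightarrow> nat \<Rightarrow> 'a set" where
  "span_chain \<omega> j \<equiv> mspan N Ind (U j \<omega>)"

context
  fixes T :: "'a set"
  assumes T: "T \<in> Ind"
begin

abbreviation T_layer :: "nat \<Rightarrow> 'b \<Rightarrow> 'a set" where
  "T_layer i \<omega> \<equiv> chain_layer (span_chain \<omega>) k T i"

lemma T_layer_subset_ground: "T_layer i \<omega> \<subseteq> N"
  using chain_layer_subset indep_subset_ground[OF M T] by (rule subset_trans)

lemma T_layer_disjoint_span: "1 \<le> i \<Longrightarrow> T_layer i \<omega> \<inter> mspan N Ind (U (i - 1) \<omega>) = {}"
  by (rule chain_layer_disjoint_chain) simp

lemma mono_span_chain: "mono (span_chain \<omega>)"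
  by (rule monoI, rule mspan_mono[OF M], rule pref_union_mono)

lemma sum_card_T_layer_le:
  assumes \<omega>: "\<omega> \<in> set_pmf p" and m: "m \<le> k"
  shows "(\<Sum>i=1..m. card (T_layer i \<omega>)) \<le> (\<Sum>i=1..m. card (S i \<omega>))"
proof -
  let ?L = "\<Union>i\<in>{1..m}. T_layer i \<omega>"
  have "disjoint_family_on (\<lambda>i. T_layer i \<omega>) {1..m}"
    using disjoint_family_on_chain_layer by (rule disjoint_family_on_mono[rotated]) (use m in auto)
  then have "(\<Sum>i=1..m. card (T_layer i \<omega>)) = card ?L"
    using finite_subset[OF T_layer_subset_ground finite_ground[OF M]]
    by (intro card_UN_disjoint[symmetric]) (auto simp: disjoint_family_on_def)
  also have "\<dots> \<le> mrank Ind (U m \<omega>)"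
  proof (rule card_le_mrank_if_subset_mspan[OF M])
    show "?L \<in> Ind" by (rule indep_subset[OF M T]) (intro UN_least chain_layer_subset)
    show "?L \<subseteq> span_chain \<omega> m" using mono_span_chain m by (rule Union_chain_layer_subset_chain)
  qed
  also have "\<dots> \<le> card (U m \<omega>)"
    using finite_subset[OF U_subset_ground[OF m \<omega>] finite_ground[OF M]] by (rule mrank_le_card[OF M])
  also have "\<dots> \<le> (\<Sum>i=1..m. card (S i \<omega>))"
    unfolding pref_union_def by (rule card_UN_le) simp
  finally show ?thesis .
qed

lemma sum_marg_T_layer_le_sum_budget:
  assumes \<omega>: "\<omega> \<in> set_pmf p"
  shows "(\<Sum>i=1..k. marg f (U (i - 1) \<omega>) (T_layer i \<omega>)) \<le> (\<Sum>i=1..k. budget i \<omega>)"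
proof -
  let ?b = "\<lambda>i. best_marg N Ind f (U (i - 1) \<omega>)"
  have "(\<Sum>i=1..k. marg f (U (i - 1) \<omega>) (T_layer i \<omega>)) \<le> (\<Sum>i=1..k. real (card (T_layer i \<omega>)) * ?b i)"
  proof (rule sum_mono)
    fix i assume i: "i \<in> {1..k}"
    have "U (i - 1) \<omega> \<subseteq> N" by (rule U_subset_ground) (use i \<omega> in auto)
    moreover have "T_layer i \<omega> \<subseteq> N - mspan N Ind (U (i - 1) \<omega>)"
      using T_layer_subset_ground[where i = i] T_layer_disjoint_span[where i = i] i by auto
    ultimately show "marg f (U (i - 1) \<omega>) (T_layer i \<omega>) \<le> real (card (T_layer i \<omega>)) * ?b i"
      by (rule marg_le_card_mult_best_marg[OF M f_sub])
  qed
  also have "\<dots> \<le> (\<Sum>i=1..k. real (card (S i \<omega>)) * ?b i)"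
  proof (rule sum_mult_le_of_partial_sums_le)
    fix m assume "m \<le> k"
    then show "(\<Sum>i=1..m. real (card (T_layer i \<omega>))) \<le> (\<Sum>i=1..m. real (card (S i \<omega>)))"
      using sum_card_T_layer_le[OF \<omega>] by (simp only: of_nat_sum[symmetric] of_nat_le_iff)
  next
    fix i assume "1 \<le> i" "i < k"
    have "U i \<omega> \<subseteq> N" by (rule U_subset_ground) (use \<open>i < k\<close> \<omega> in auto)
    then have "best_marg N Ind f (U i \<omega>) \<le> ?b i"
      by (intro best_marg_antimono[OF M f_sub] pref_union_mono) simp_all
    then show "?b (Suc i) \<le> ?b i" by simp
  qed (rule best_marg_nonneg[OF M])
  finally show ?thesis unfolding budget_def .
qed

lemma marg_last_T_layer_le:
  assumes residual: "\<And>T'. T' \<in> Ind \<Longrightarrow> marg f (U k \<omega>) (T' - mspan N Ind (U k \<omega>)) \<le> \<beta>"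
  shows "marg f (U k \<omega>) (T_layer (k + 1) \<omega>) \<le> \<beta>"
proof -
  have "T_layer (k + 1) \<omega> \<in> Ind" using chain_layer_subset by (rule indep_subset[OF M T])
  moreover have "T_layer (k + 1) \<omega> - mspan N Ind (U k \<omega>) = T_layer (k + 1) \<omega>"
    using T_layer_disjoint_span[where i = "k + 1"] by auto
  ultimately show ?thesis using residual by metis
qed

lemma expectation_T_layers_le_f_V:
  assumes residual: "\<And>\<omega> T'. \<omega> \<in> set_pmf p \<Longrightarrow> T' \<in> Ind \<Longrightarrow>
      marg f (U k \<omega>) (T' - mspan N Ind (U k \<omega>)) \<le> \<beta>"
  shows "(1 - \<epsilon>) * (\<Sum>i=1..k+1. measure_pmf.expectation p (\<lambda>\<omega>. marg f (U (i - 1) \<omega>) (T_layer i \<omega>)))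
      - (1 - \<epsilon>) * \<beta> \<le> measure_pmf.expectation p (\<lambda>\<omega>. f (V k \<omega>))"
proof -
  let ?m = "\<lambda>i \<omega>. marg f (U (i - 1) \<omega>) (T_layer i \<omega>)"
  let ?E = "measure_pmf.expectation p"
  have int_m: "integrable (measure_pmf p) (?m i)" if "i \<le> k + 1" for i
  proof (rule integrable_measure_pmf_bounded[where B = "2 * fbound"])
    fix \<omega> assume "\<omega> \<in> set_pmf p"
    then have "U (i - 1) \<omega> \<subseteq> N" by (rule U_subset_ground[rotated]) (use that in simp)
    then show "\<bar>?m i \<omega>\<bar> \<le> 2 * fbound" using T_layer_subset_ground by (rule abs_marg_le_fbound)
  qed
  have "?E (\<lambda>\<omega>. \<Sum>i=1..k. ?m i \<omega>) \<le> ?E (\<lambda>\<omega>. \<Sum>i=1..k. budget i \<omega>)"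
    using sum_marg_T_layer_le_sum_budget
    by (intro integral_mono_AE Bochner_Integration.integrable_sum integrable_budget int_m)
       (auto simp: AE_measure_pmf_iff)
  moreover have "?E (?m (k + 1)) \<le> ?E (\<lambda>_. \<beta>)"
    using marg_last_T_layer_le residual
    by (intro integral_mono_AE int_m) (auto simp: AE_measure_pmf_iff)
  ultimately have "(\<Sum>i=1..k+1. ?E (?m i)) \<le> ?E (\<lambda>\<omega>. \<Sum>i=1..k. budget i \<omega>) + \<beta>"
    using int_m by (simp add: Bochner_Integration.integral_sum)
  then have "(1 - \<epsilon>) * (\<Sum>i=1..k+1. ?E (?m i)) \<le> (1 - \<epsilon>) * (?E (\<lambda>\<omega>. \<Sum>i=1..k. budget i \<omega>) + \<beta>)"
    using eps(2) by (intro mult_left_mono) auto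
  then show ?thesis using expectation_sum_budget_le_f_V by (simp add: algebra_simps)
qed

definition span_partition :: "nat \<Rightarrow> 'a set list \<Rightarrow> 'a set" where
  "span_partition i Ss = chain_layer (\<lambda>j. mspan N Ind (\<Union> (set (take j Ss)))) k T i"

lemma span_partition_eq_T_layer:
  "i \<le> k + 1 \<Longrightarrow> span_partition i (map (\<lambda>j. S j \<omega>) [1..<k+1]) = T_layer i \<omega>"
  unfolding span_partition_def by (rule chain_layer_cong) (simp_all only: Union_take_eq_pref_union)

lemma exists_span_partition:
  assumes residual: "\<And>\<omega> T'. \<omega> \<in> set_pmf p \<Longrightarrow> T' \<in> Ind \<Longrightarrow>
      marg f (U k \<omega>) (T' - mspan N Ind (U k \<omega>)) \<le> \<beta>"
  shows "\<exists>Tp :: nat \<Rightarrow> 'a set list \<Rightarrow> 'a set.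
           (\<forall>\<omega> \<in> set_pmf p.
              let Ts = (\<lambda>i. Tp i (map (\<lambda>j. S j \<omega>) [1..<k+1])) in
              (\<Union>i\<in>{1..k+1}. Ts i) = T \<and> disjoint_family_on Ts {1..k+1} \<and>
              (\<forall>i\<in>{1..k+1}. Ts i \<inter> mspan N Ind (U (i - 1) \<omega>) = {})) \<and>
           measure_pmf.expectation p (\<lambda>\<omega>. f (V k \<omega>))
             \<ge> (1 - \<epsilon>) * (\<Sum>i=1..k+1. measure_pmf.expectation p
                   (\<lambda>\<omega>. marg f (U (i - 1) \<omega>) (Tp i (map (\<lambda>j. S j \<omega>) [1..<k+1]))))
               - (1 - \<epsilon>) * \<beta>"
proof (intro exI[of _ span_partition] conjI ballI)
  fix \<omega> assume "\<omega> \<in> set_pmf p"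
  define Ss where "Ss = map (\<lambda>j. S j \<omega>) [1..<k+1]"
  have layer: "span_partition i Ss = T_layer i \<omega>" if "i \<in> {1..k+1}" for i
    unfolding Ss_def using that by (intro span_partition_eq_T_layer) simp
  have "T \<inter> span_chain \<omega> 0 = {}" using indep_disjoint_mspan_empty[OF M T] by simp
  then have "(\<Union>i\<in>{1..k+1}. T_layer i \<omega>) = T" by (rule Union_chain_layer)
  moreover have "disjoint_family_on (\<lambda>i. T_layer i \<omega>) {1..k+1}" by (rule disjoint_family_on_chain_layer)
  ultimately show "let Ts = (\<lambda>i. span_partition i (map (\<lambda>j. S j \<omega>) [1..<k+1])) in
      (\<Union>i\<in>{1..k+1}. Ts i) = T \<and> disjoint_family_on Ts {1..k+1} \<and>
      (\<forall>i\<in>{1..k+1}. Ts i \<inter> mspan N Ind (U (i - 1) \<omega>) = {})"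
    unfolding Let_def Ss_def[symmetric] using T_layer_disjoint_span
    by (simp add: layer disjoint_family_on_def)
next
  have "(\<Sum>i=1..k+1. measure_pmf.expectation p (\<lambda>\<omega>. marg f (U (i - 1) \<omega>) (span_partition i (map (\<lambda>j. S j \<omega>) [1..<k+1]))))
      = (\<Sum>i=1..k+1. measure_pmf.expectation p (\<lambda>\<omega>. marg f (U (i - 1) \<omega>) (T_layer i \<omega>)))"
  proof (rule sum.cong[OF refl])
    fix i assume "i \<in> {1..k+1}"
    then have "i \<le> k + 1" by simp
    then show "measure_pmf.expectation p (\<lambda>\<omega>. marg f (U (i - 1) \<omega>) (span_partition i (map (\<lambda>j. S j \<omega>) [1..<k+1])))
        = measure_pmf.expectation p (\<lambda>\<omega>. marg f (U (i - 1) \<omega>) (T_layer i \<omega>))"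
      by (simp only: span_partition_eq_T_layer)
  qed
  then show "measure_pmf.expectation p (\<lambda>\<omega>. f (V k \<omega>))
      \<ge> (1 - \<epsilon>) * (\<Sum>i=1..k+1. measure_pmf.expectation p
            (\<lambda>\<omega>. marg f (U (i - 1) \<omega>) (span_partition i (map (\<lambda>j. S j \<omega>) [1..<k+1]))))
        - (1 - \<epsilon>) * \<beta>"
    using expectation_T_layers_le_f_V[OF residual] by simp
qed

end

end

theorem mainTheorem6:
  fixes N :: "'a set" and Ind :: "'a set set" and f :: "'a set \<Rightarrow> real"
    and \<epsilon> \<beta> :: real and k :: nat
    and p :: "'b pmf" and I S :: "nat \<Rightarrow> 'b \<Rightarrow> 'a set"
  assumes M: "matroid N Ind"
    and f_norm: "normalized f" and f_sub: "submodular N f"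
    and eps: "0 < \<epsilon>" "\<epsilon> < 1" and beta: "0 \<le> \<beta>"
    and a_as: "\<And>i \<omega>. i \<in> {1..k} \<Longrightarrow> \<omega> \<in> set_pmf p \<Longrightarrow>
        I i \<omega> \<subseteq> S i \<omega> \<and> S i \<omega> \<subseteq> N - mspan N Ind (pref_union S (i - 1) \<omega>) \<and>
        contr_indep N Ind (pref_union S (i - 1) \<omega>) (I i \<omega>)"
    and a_exp: "\<And>i \<omega>0. i \<in> {1..k} \<Longrightarrow> \<omega>0 \<in> set_pmf p \<Longrightarrow>
        measure_pmf.expectation (cond_pmf p (hist_event I S i \<omega>0))
          (\<lambda>\<omega>. marg f (pref_union S (i - 1) \<omega>) (I i \<omega>))
        \<ge> (1 - \<epsilon>) * measure_pmf.expectation (cond_pmf p (hist_event I S i \<omega>0))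
              (\<lambda>\<omega>. real (card (S i \<omega>)))
            * best_marg N Ind f (pref_union S (i - 1) \<omega>0)"
    and b: "\<And>\<omega> T. \<omega> \<in> set_pmf p \<Longrightarrow> T \<in> Ind \<Longrightarrow>
        marg f (pref_union S k \<omega>) (T - mspan N Ind (pref_union S k \<omega>)) \<le> \<beta>"
  shows "(measure_pmf.expectation p (\<lambda>\<omega>. f (pref_union I k \<omega>))
           \<ge> (1 - \<epsilon>) * measure_pmf.expectation p (\<lambda>\<omega>. f (pref_union S k \<omega>))) \<and>
         (\<forall>T \<in> Ind. \<exists>Tp :: nat \<Rightarrow> 'a set list \<Rightarrow> 'a set.
           (\<forall>\<omega> \<in> set_pmf p.
              let Ts = (\<lambda>i. Tp i (map (\<lambda>j. S j \<omega>) [1..<k+1])) in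
              (\<Union>i\<in>{1..k+1}. Ts i) = T \<and> disjoint_family_on Ts {1..k+1} \<and>
              (\<forall>i\<in>{1..k+1}. Ts i \<inter> mspan N Ind (pref_union S (i - 1) \<omega>) = {})) \<and>
           measure_pmf.expectation p (\<lambda>\<omega>. f (pref_union I k \<omega>))
             \<ge> (1 - \<epsilon>) * (\<Sum>i=1..k+1. measure_pmf.expectation p
                   (\<lambda>\<omega>. marg f (pref_union S (i - 1) \<omega>) (Tp i (map (\<lambda>j. S j \<omega>) [1..<k+1]))))
               - (1 - \<epsilon>) * \<beta>)"
proof -
  interpret matroid_greedy_rounds N Ind f \<epsilon> k p I S
    using M f_norm f_sub eps a_as a_exp by unfold_locales auto
  show ?thesis
    using expectation_f_U_le_f_V exists_span_partition[OF _ b] by blast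
qed

end
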